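(* Let $l,p,r>1$ be integers, $n=lpr$, and $A\in\{0,1\}^{n\times n}$. Then $A$ admits both an $(l,pr)$ factorization and a $(pl,r)$ factorization if and only if $A$ admits an $(l,p,r)$ factorization.
   Context: Binary matrices have entries in $\{0,1\}$; Kronecker products use Boolean arithmetic ($1+1=1$). For positive integers $n_1,\dots,n_m$ with $\prod n_i=n$, an $(n_1,\dots,n_m)$ factorization of $A\in\{0,1\}^{n\times n}$ is an expression $A=A_1\otimes\cdots\otimes A_m$ with $A_i\in\{0,1\}^{n_i\times n_i}$. *)

theory Defs
  imports Main
begin

text \<open>Binary n x n matrices are represented as functions nat => nat => bool,
  only the entries with indices below n being relevant (True = 1, False = 0).\<close>

definition bkron :: "nat \<Rightarrow> (nat \<Rightarrow> nat \<Rightarrow> bool) \<Rightarrow> (nat \<Rightarrow> nat \<Rightarrow> bool) \<Rightarrow> (nat \<Rightarrow> nat \<Rightarrow> bool)" where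
  "bkron k A B = (\<lambda>i j. A (i div k) (j div k) \<and> B (i mod k) (j mod k))"

definition bmat_eq :: "nat \<Rightarrow> (nat \<Rightarrow> nat \<Rightarrow> bool) \<Rightarrow> (nat \<Rightarrow> nat \<Rightarrow> bool) \<Rightarrow> bool" where
  "bmat_eq n A B = (\<forall>i<n. \<forall>j<n. A i j = B i j)"

definition has_fact2 :: "nat \<Rightarrow> nat \<Rightarrow> (nat \<Rightarrow> nat \<Rightarrow> bool) \<Rightarrow> bool" where
  "has_fact2 n1 n2 A = (\<exists>A1 A2. bmat_eq (n1 * n2) A (bkron n2 A1 A2))"

definition has_fact3 :: "nat \<Rightarrow> nat \<Rightarrow> nat \<Rightarrow> (nat \<Rightarrow> nat \<Rightarrow> bool) \<Rightarrow> bool" where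
  "has_fact3 n1 n2 n3 A =
     (\<exists>A1 A2 A3. bmat_eq (n1 * n2 * n3) A (bkron (n2 * n3) A1 (bkron n3 A2 A3)))"

end

theory Submission
  imports Defs
begin

text \<open>The Kronecker product is associative, so an (l,p,r) factorization yields both coarser
  ones. Conversely, let A = B1 (x) B2 with B1 of size l and A = C1 (x) C3 with C3 of size r.
  If B1 has a nonzero entry (a,b), then B2 reappears as the (a,b) block of size pr of A;
  reading the same block off the second factorization shows B2 = D (x) C3, where D is the
  (a,b) block of size p of C1. If B1 vanishes, so does A, and any third factor will do.\<close>

definition bblock :: "nat \<Rightarrow> nat \<Rightarrow> nat \<Rightarrow> (nat \<Rightarrow> nat \<Rightarrow> bool) \<Rightarrow> (nat \<Rightarrow> nat \<Rightarrow> bool)" where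
  "bblock k a b A = (\<lambda>i j. A (a * k + i) (b * k + j))"

lemma bkron_assoc: "bkron (p * r) A1 (bkron r A2 A3) = bkron r (bkron p A1 A2) A3"
proof -
  have "i div (p * r) = i div r div p" for i :: nat
    by (metis div_mult2_eq mult.commute)
  moreover have "i mod (p * r) div r = i div r mod p" for i :: nat
    by (cases "r = 0") (simp_all add: mod_mult2_eq mult.commute[of p r])
  moreover have "i mod (p * r) mod r = i mod r" for i :: nat
    by (simp add: mod_mod_cancel)
  ultimately show ?thesis
    by (simp add: bkron_def fun_eq_iff conj_assoc)
qed

lemma bkron_cong_right:
  assumes "0 < k" and "bmat_eq k B B'"
  shows "bkron k A B = bkron k A B'"
  using assms by (simp add: bkron_def bmat_eq_def fun_eq_iff)

lemma bmat_eq_bkron_left_zero: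
  assumes "\<forall>a<m. \<forall>b<m. \<not> A a b"
  shows "bmat_eq (m * k) (bkron k A B) (bkron k A B')"
  using assms by (simp add: bkron_def bmat_eq_def less_mult_imp_div_less)

lemma bmat_eq_bblock:
  assumes "bmat_eq (m * k) A B" and "a < m" and "b < m"
  shows "bmat_eq k (bblock k a b A) (bblock k a b B)"
proof -
  have "c * k + i < m * k" if "c < m" "i < k" for c i
  proof -
    have "c * k + i < Suc c * k" using that(2) by simp
    also have "\<dots> \<le> m * k" using that(1) by (metis Suc_leI mult_le_mono1)
    finally show ?thesis .
  qed
  then show ?thesis
    using assms by (simp add: bmat_eq_def bblock_def)
qed

lemma bmat_eq_bblock_bkron:
  assumes "A a b"
  shows "bmat_eq k (bblock k a b (bkron k A B)) B"
  using assms by (simp add: bmat_eq_def bblock_def bkron_def)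

lemma bblock_bkron:
  assumes "0 < k"
  shows "bblock (c * k) a b (bkron k A B) = bkron k (bblock c a b A) B"
proof -
  have "(x * (c * k) + i) div k = x * c + i div k" and "(x * (c * k) + i) mod k = i mod k"
    for x i :: nat
    using assms by (simp_all add: mult.assoc[symmetric])
  then show ?thesis
    by (simp add: bblock_def bkron_def fun_eq_iff)
qed

lemma bmat_eq_bkron_refine:
  assumes AB: "bmat_eq (m * (p * r)) A (bkron (p * r) B1 B2)"
    and AC: "bmat_eq (m * (p * r)) A (bkron r C1 C3)"
    and "0 < p * r"
  shows "\<exists>D. bmat_eq (m * (p * r)) A (bkron (p * r) B1 (bkron r D C3))"
proof (cases "\<exists>a<m. \<exists>b<m. B1 a b")
  case True
  then obtain a b where "a < m" "b < m" "B1 a b" by blast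
  have "bmat_eq (p * r) (bblock (p * r) a b A) (bblock (p * r) a b (bkron (p * r) B1 B2))"
    using bmat_eq_bblock[OF AB \<open>a < m\<close> \<open>b < m\<close>] .
  moreover have "bmat_eq (p * r) (bblock (p * r) a b A) (bkron r (bblock p a b C1) C3)"
    using bmat_eq_bblock[OF AC \<open>a < m\<close> \<open>b < m\<close>] bblock_bkron[of r p] \<open>0 < p * r\<close> by simp
  ultimately have "bmat_eq (p * r) B2 (bkron r (bblock p a b C1) C3)"
    using bmat_eq_bblock_bkron[of B1 a b "p * r" B2] \<open>B1 a b\<close> by (simp add: bmat_eq_def)
  then show ?thesis
    using AB bkron_cong_right[OF \<open>0 < p * r\<close>] by metis
next
  case False
  then show ?thesis
    using AB bmat_eq_bkron_left_zero[of m B1 "p * r" B2 "bkron r B2 C3"]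
    by (auto simp: bmat_eq_def)
qed

theorem lemma5:
  fixes l p r :: nat and A :: "nat \<Rightarrow> nat \<Rightarrow> bool"
  assumes "l > 1" and "p > 1" and "r > 1"
  shows "(has_fact2 l (p * r) A \<and> has_fact2 (p * l) r A) \<longleftrightarrow> has_fact3 l p r A"
proof
  assume "has_fact2 l (p * r) A \<and> has_fact2 (p * l) r A"
  then obtain B1 B2 C1 C3 where
    "bmat_eq (l * (p * r)) A (bkron (p * r) B1 B2)" and "bmat_eq (l * (p * r)) A (bkron r C1 C3)"
    unfolding has_fact2_def by (metis mult.assoc mult.commute)
  then obtain D where "bmat_eq (l * (p * r)) A (bkron (p * r) B1 (bkron r D C3))"
    using bmat_eq_bkron_refine assms by fastforce
  then show "has_fact3 l p r A"
    unfolding has_fact3_def by (metis mult.assoc)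
next
  assume "has_fact3 l p r A"
  then obtain A1 A2 A3 where A: "bmat_eq (l * p * r) A (bkron (p * r) A1 (bkron r A2 A3))"
    unfolding has_fact3_def by blast
  then have "has_fact2 l (p * r) A"
    unfolding has_fact2_def by (metis mult.assoc)
  moreover have "has_fact2 (p * l) r A"
    using A unfolding has_fact2_def bkron_assoc by (metis mult.commute)
  ultimately show "has_fact2 l (p * r) A \<and> has_fact2 (p * l) r A" ..
qed

end
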